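(* Let $\pi$ be an $r$-homogeneous strongly log-concave distribution with associated matroid $\mathcal{M}$, let $2\le k\le r$, let $f^{(k)}:\mathcal{M}(k)\to\mathbb{R}_{\ge0}$, and let $f^{(k-1)}=P^{\uparrow}_{k-1}f^{(k)}$, i.e. $f^{(k-1)}(J)=\sum_{I\in\mathcal{M}(k),I\supset J}\frac{w(I)}{w(J)}f^{(k)}(I)$ for $J\in\mathcal{M}(k-1)$. Then $$\mathrm{Ent}_{\pi_k}(f^{(k)})\ge\frac{k}{k-1}\,\mathrm{Ent}_{\pi_{k-1}}(f^{(k-1)}).$$
   Context: $\pi:2^{[n]}\to\mathbb{R}_{\ge0}$ has generating polynomial $g_\pi(x)=\sum_S\pi(S)\prod_{i\in S}x_i$; $r$-homogeneous means the support consists of $r$-sets; strongly log-concave means for every $J\subseteq[n]$, $\nabla^2\log(\partial_J g_\pi)$ is negative semidefinite at the all-ones vector. The support $\mathcal{B}$ is the set of bases of a rank-$r$ matroid $\mathcal{M}=(E,\mathcal{I})$; $\mathcal{M}(k)$ = independent sets of size $k$. Weights: $w(I)=(r-|I|)!\sum_{B\in\mathcal{B},B\supseteq I}\pi(B)$ for $I\in\mathcal{I}$; $\pi_k(I)=w(I)/\sum_{I'\in\mathcal{M}(k)}w(I')$ on $\mathcal{M}(k)$. $\mathrm{Ent}_\mu(f)=\mathbb{E}_\mu(f\log f)-\mathbb{E}_\mu f\log\mathbb{E}_\mu f$ with $0\log0=0$. *)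

theory Defs
  imports Complex_Main
begin

text \<open>Ground set: a finite type 'a (playing the role of [n]).
  A distribution is pi :: 'a set => real, nonnegative, summing to 1.\<close>

definition is_distribution :: "('a::finite set \<Rightarrow> real) \<Rightarrow> bool" where
  "is_distribution \<pi> \<longleftrightarrow> (\<forall>S. \<pi> S \<ge> 0) \<and> (\<Sum>S\<in>UNIV. \<pi> S) = 1"

definition homogeneous :: "nat \<Rightarrow> ('a::finite set \<Rightarrow> real) \<Rightarrow> bool" where
  "homogeneous r \<pi> \<longleftrightarrow> (\<forall>S. \<pi> S \<noteq> 0 \<longrightarrow> card S = r)"

text \<open>The generating polynomial g(x) = sum_S pi(S) prod_{i in S} x_i is multiaffine.
  Its partial derivative d_J g is sum_{S \<supseteq> J} pi(S) prod_{i in S-J} x_i.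
  Values at the all-ones vector of d_J g, its gradient and its Hessian:\<close>

definition dval :: "('a::finite set \<Rightarrow> real) \<Rightarrow> 'a set \<Rightarrow> real" where
  "dval \<pi> J = (\<Sum>S | J \<subseteq> S. \<pi> S)"

definition dgrad :: "('a::finite set \<Rightarrow> real) \<Rightarrow> 'a set \<Rightarrow> 'a \<Rightarrow> real" where
  "dgrad \<pi> J i = (if i \<in> J then 0 else dval \<pi> (insert i J))"

definition dhess :: "('a::finite set \<Rightarrow> real) \<Rightarrow> 'a set \<Rightarrow> 'a \<Rightarrow> 'a \<Rightarrow> real" where
  "dhess \<pi> J i j = (if i \<in> J \<or> j \<in> J \<or> i = j then 0 else dval \<pi> (insert i (insert j J)))"

text \<open>Hessian of log p at 1 is H/p - grad grad^T / p^2; strongly log-concave means it is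
  negative semidefinite for every J (when p(1)=0, i.e. d_J g = 0, the form is 0).\<close>

definition strongly_log_concave :: "('a::finite set \<Rightarrow> real) \<Rightarrow> bool" where
  "strongly_log_concave \<pi> \<longleftrightarrow>
     (\<forall>J v. (\<Sum>i\<in>UNIV. \<Sum>j\<in>UNIV. v i * v j *
        (dhess \<pi> J i j / dval \<pi> J - dgrad \<pi> J i * dgrad \<pi> J j / (dval \<pi> J)^2)) \<le> 0)"

definition support :: "('a set \<Rightarrow> real) \<Rightarrow> 'a set set" where
  "support \<pi> = {B. \<pi> B \<noteq> 0}"

definition matroid_bases :: "'a set set \<Rightarrow> bool" where
  "matroid_bases \<B> \<longleftrightarrow> \<B> \<noteq> {} \<and>
     (\<forall>B1\<in>\<B>. \<forall>B2\<in>\<B>. \<forall>x\<in>B1 - B2. \<exists>y\<in>B2 - B1. insert y (B1 - {x}) \<in> \<B>)"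

definition indep :: "('a set \<Rightarrow> real) \<Rightarrow> 'a set \<Rightarrow> bool" where
  "indep \<pi> I \<longleftrightarrow> (\<exists>B\<in>support \<pi>. I \<subseteq> B)"

definition Mk :: "('a set \<Rightarrow> real) \<Rightarrow> nat \<Rightarrow> 'a set set" where
  "Mk \<pi> k = {I. indep \<pi> I \<and> card I = k}"

definition wt :: "('a::finite set \<Rightarrow> real) \<Rightarrow> nat \<Rightarrow> 'a set \<Rightarrow> real" where
  "wt \<pi> r I = fact (r - card I) * (\<Sum>B | B \<in> support \<pi> \<and> I \<subseteq> B. \<pi> B)"

definition pik :: "('a::finite set \<Rightarrow> real) \<Rightarrow> nat \<Rightarrow> nat \<Rightarrow> 'a set \<Rightarrow> real" where
  "pik \<pi> r k I = wt \<pi> r I / (\<Sum>I'\<in>Mk \<pi> k. wt \<pi> r I')"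

text \<open>Entropy of f w.r.t. the measure mu on the finite set A (Isabelle: ln 0 = 0, so 0 log 0 = 0).\<close>

definition Ent :: "('b \<Rightarrow> real) \<Rightarrow> 'b set \<Rightarrow> ('b \<Rightarrow> real) \<Rightarrow> real" where
  "Ent \<mu> A f = (\<Sum>x\<in>A. \<mu> x * (f x * ln (f x)))
      - (\<Sum>x\<in>A. \<mu> x * f x) * ln (\<Sum>x\<in>A. \<mu> x * f x)"

definition up_op :: "('a::finite set \<Rightarrow> real) \<Rightarrow> nat \<Rightarrow> nat \<Rightarrow> ('a set \<Rightarrow> real) \<Rightarrow> 'a set \<Rightarrow> real" where
  "up_op \<pi> r k f J = (\<Sum>I | I \<in> Mk \<pi> k \<and> J \<subset> I. wt \<pi> r I / wt \<pi> r J * f I)"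

end

theory Submission
  imports Defs
begin

text \<open>The weights \<open>w I = (r - |I|)! \<Sum>\<^bsub>B \<supseteq> I\<^esub> \<pi> B\<close> satisfy \<open>w J = \<Sum>\<^bsub>x \<notin> J\<^esub> w (J \<union> {x})\<close>,
  and strong log-concavity of \<open>\<partial>\<^sub>T g\<close> says that the quadratic form of the link of \<open>T\<close>, whose
  edge \<open>x y\<close> has weight \<open>w (T \<union> {x, y})\<close>, is nonpositive on vectors orthogonal to the vertex
  weights \<open>w (T \<union> {x})\<close>. Scaled by \<open>w T\<close>, the entropy on level \<open>k + 1\<close> of the link of \<open>T\<close>
  splits into the entropies on level \<open>k\<close> of the links of the vertices plus the level-1 entropy of
  the \<open>k\<close>-fold up-projection. For \<open>k = 1\<close> the contraction \<open>Ent\<^sub>2 f \<ge> 2 Ent\<^sub>1 (P f)\<close> follows by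
  applying \<open>ln u \<le> u - 1\<close> to every edge and bounding the resulting quadratic form spectrally;
  for larger \<open>k\<close> one inducts, using the induction hypothesis in the links and telescoping the
  contractions of the lower levels for the common level-1 term.\<close>

definition layer :: "'a set \<Rightarrow> nat \<Rightarrow> 'a set set" where
  "layer T m = {I. T \<subseteq> I \<and> card I = card T + m}"

lemma layer_0 [simp]: "layer (T :: 'a::finite set) 0 = {T}"
proof -
  have "I = T" if "T \<subseteq> I" "card I = card T" for I
    using card_subset_eq[of I T] that by simp
  then show ?thesis
    by (auto simp: layer_def)
qed

lemma sum_layer_pairs:
  fixes T :: "'a::finite set"
  shows "(\<Sum>p\<in>Sigma (layer T m) (\<lambda>I. I - T). \<phi> (fst p)) = real m * (\<Sum>I\<in>layer T m. \<phi> I)"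
proof -
  have "card (I - T) = m" if "I \<in> layer T m" for I
    using that by (simp add: layer_def card_Diff_subset)
  then have "(\<Sum>I\<in>layer T m. \<Sum>x\<in>I - T. \<phi> I) = real m * (\<Sum>I\<in>layer T m. \<phi> I)"
    by (simp add: sum_distrib_left)
  moreover have "(\<Sum>p\<in>Sigma (layer T m) (\<lambda>I. I - T). \<phi> (fst p)) = (\<Sum>I\<in>layer T m. \<Sum>x\<in>I - T. \<phi> I)"
    by (subst sum.Sigma) (auto simp: split_beta)
  ultimately show ?thesis
    by simp
qed

lemma sum_layer_extend:
  fixes T :: "'a::finite set"
  shows "(\<Sum>x\<in>-T. \<Sum>I\<in>layer (insert x T) m. \<phi> I) = real (Suc m) * (\<Sum>I\<in>layer T (Suc m). \<phi> I)"
proof -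
  have "(\<Sum>x\<in>-T. \<Sum>I\<in>layer (insert x T) m. \<phi> I)
      = (\<Sum>p\<in>Sigma (-T) (\<lambda>x. layer (insert x T) m). \<phi> (snd p))"
    by (simp add: sum.Sigma split_beta)
  also have "\<dots> = (\<Sum>p\<in>Sigma (layer T (Suc m)) (\<lambda>I. I - T). \<phi> (fst p))"
    by (rule sum.reindex_bij_witness[where i=prod.swap and j=prod.swap])
      (auto simp: layer_def)
  finally show ?thesis
    by (simp only: sum_layer_pairs)
qed

lemma sum_layer_one:
  fixes T :: "'a::finite set" and \<phi> :: "'a set \<Rightarrow> real"
  shows "(\<Sum>I\<in>layer T (Suc 0). \<phi> I) = (\<Sum>x\<in>-T. \<phi> (insert x T))"
  using sum_layer_extend[where m=0 and T=T and \<phi>=\<phi>] by simp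

lemma sum_layer_lower:
  fixes T :: "'a::finite set"
  shows "(\<Sum>J\<in>layer T m. \<Sum>x\<in>-J. \<phi> (insert x J)) = real (Suc m) * (\<Sum>I\<in>layer T (Suc m). \<phi> I)"
proof -
  have "(\<Sum>J\<in>layer T m. \<Sum>x\<in>-J. \<phi> (insert x J))
      = (\<Sum>p\<in>Sigma (layer T m) uminus. \<phi> (insert (snd p) (fst p)))"
    by (simp add: sum.Sigma split_beta)
  also have "\<dots> = (\<Sum>p\<in>Sigma (layer T (Suc m)) (\<lambda>I. I - T). \<phi> (fst p))"
    by (rule sum.reindex_bij_witness[where i="\<lambda>(I, x). (I - {x}, x)" and j="\<lambda>(J, x). (insert x J, x)"])
      (auto simp: layer_def)
  finally show ?thesis
    by (simp only: sum_layer_pairs)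
qed

lemma sum_distinct_pairs_swap:
  fixes T :: "'a::finite set" and \<phi> :: "'a \<Rightarrow> 'a \<Rightarrow> real"
  shows "(\<Sum>x\<in>-T. \<Sum>y\<in>-insert x T. \<phi> x y) = (\<Sum>x\<in>-T. \<Sum>y\<in>-insert x T. \<phi> y x)"
proof -
  have "(\<Sum>x\<in>-T. \<Sum>y\<in>-insert x T. \<phi> x y) = (\<Sum>p\<in>Sigma (-T) (\<lambda>x. -insert x T). \<phi> (fst p) (snd p))"
    by (simp add: sum.Sigma split_beta)
  also have "\<dots> = (\<Sum>p\<in>Sigma (-T) (\<lambda>x. -insert x T). \<phi> (snd p) (fst p))"
    by (rule sum.reindex_bij_witness[where i=prod.swap and j=prod.swap]) auto
  also have "\<dots> = (\<Sum>x\<in>-T. \<Sum>y\<in>-insert x T. \<phi> y x)"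
    by (simp add: sum.Sigma split_beta)
  finally show ?thesis .
qed

text \<open>\<open>ln u \<le> u - 1\<close> for \<open>u = x y / (f c)\<close>, multiplied by \<open>b f\<close>.\<close>
lemma mult_ln_add_le:
  fixes b f x y c :: real
  assumes "0 \<le> b" "0 \<le> b * f" "0 \<le> x" "0 \<le> y" "0 < c"
    and pos: "0 < b * f \<Longrightarrow> 0 < x \<and> 0 < y"
  shows "b * f * (ln x + ln y) \<le> b * f * (ln f + ln c) + b * x * y / c - b * f"
proof (cases "b * f = 0")
  case True
  then show ?thesis
    using assms by auto
next
  case False
  then have "0 < b * f"
    using assms(2) by linarith
  then have "0 < b" "0 < f" "0 < x" "0 < y"
    using assms(1) pos by (auto simp: zero_less_mult_iff)
  define u where "u = x * y / (f * c)"
  have "ln x + ln y = ln u + ln f + ln c"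
    using \<open>0 < f\<close> \<open>0 < x\<close> \<open>0 < y\<close> \<open>0 < c\<close> by (simp add: u_def ln_div ln_mult)
  moreover have "b * f * ln u \<le> b * f * (u - 1)"
    using \<open>0 < b\<close> \<open>0 < f\<close> \<open>0 < x\<close> \<open>0 < y\<close> \<open>0 < c\<close> by (simp add: u_def ln_le_minus_one)
  moreover have "b * f * u = b * x * y / c"
    using \<open>0 < f\<close> by (simp add: u_def)
  ultimately show ?thesis
    by (simp add: algebra_simps)
qed

lemma contraction_step:
  fixes A B E K :: real
  assumes "1 < K" "K * B \<le> (K - 1) * A" "(K - 1) * E \<le> B"
  shows "(1 + K) * (B + E) \<le> K * (A + E)"
proof -
  have "0 \<le> K * ((K - 1) * A - K * B) + (B - (K - 1) * E)"
    using assms by simp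
  also have "\<dots> = (K - 1) * (K * (A + E) - (1 + K) * (B + E))"
    by (simp add: algebra_simps)
  finally show ?thesis
    using \<open>1 < K\<close> by (simp add: zero_le_mult_iff)
qed

definition link_form :: "('a::finite set \<Rightarrow> real) \<Rightarrow> 'a set \<Rightarrow> ('a \<Rightarrow> real) \<Rightarrow> real" where
  "link_form w T z = (\<Sum>x\<in>-T. \<Sum>y\<in>-insert x T. w (insert y (insert x T)) * z x * z y)"

text \<open>In the application \<open>w = wt \<pi> r\<close>: the factorial in \<^const>\<open>wt\<close> is what makes
  \<open>weight_sum_insert\<close> hold, and \<open>link_form_nonpos\<close> is strong log-concavity of \<open>\<partial>\<^sub>T g\<close>.\<close>
locale weighted_lc_complex =
  fixes w :: "'a::finite set \<Rightarrow> real" and r :: nat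
  assumes weight_nonneg: "0 \<le> w I"
    and weight_above_rank: "r < card I \<Longrightarrow> w I = 0"
    and weight_sum_insert: "card J < r \<Longrightarrow> (\<Sum>x\<in>-J. w (insert x J)) = w J"
    and link_form_nonpos: "0 < w T \<Longrightarrow> (\<Sum>x\<in>-T. w (insert x T) * y x) = 0 \<Longrightarrow> link_form w T y \<le> 0"
begin

definition layer_sum :: "'a set \<Rightarrow> nat \<Rightarrow> ('a set \<Rightarrow> real) \<Rightarrow> real" where
  "layer_sum T m h = (\<Sum>I\<in>layer T m. w I * h I)"

definition up :: "('a set \<Rightarrow> real) \<Rightarrow> 'a set \<Rightarrow> real" where
  "up h J = (\<Sum>x\<in>-J. w (insert x J) / w J * h (insert x J))"

text \<open>Since \<open>layer_sum T m (\<lambda>_. 1) = w T / fact m\<close> (\<open>layer_sum_const\<close>), this is \<open>w T\<close> times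
  the entropy of \<open>h\<close> under the normalised weights on layer \<open>m\<close> of the link of \<open>T\<close>.\<close>
definition scaled_ent :: "'a set \<Rightarrow> nat \<Rightarrow> ('a set \<Rightarrow> real) \<Rightarrow> real" where
  "scaled_ent T m h = fact m * (layer_sum T m (\<lambda>I. h I * ln (h I))
     - layer_sum T m h * ln (layer_sum T m h / layer_sum T m (\<lambda>_. 1)))"

definition nonneg_on_layer :: "'a set \<Rightarrow> nat \<Rightarrow> ('a set \<Rightarrow> real) \<Rightarrow> bool" where
  "nonneg_on_layer T m h \<longleftrightarrow> (\<forall>I\<in>layer T m. 0 < w I \<longrightarrow> 0 \<le> h I)"

lemma weight_insert_eq_0:
  assumes "w J = 0"
  shows "w (insert x J) = 0"
proof (cases "x \<in> J")
  case False
  show ?thesis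
  proof (cases "card J < r")
    case True
    then have "(\<Sum>y\<in>-J. w (insert y J)) = 0"
      using weight_sum_insert assms by simp
    then show ?thesis
      using False sum_nonneg_eq_0_iff[of "-J" "\<lambda>y. w (insert y J)"] weight_nonneg by simp
  next
    case False
    then show ?thesis
      using \<open>x \<notin> J\<close> weight_above_rank by simp
  qed
qed (simp add: insert_absorb assms)

lemma weight_superset_eq_0:
  assumes "w T = 0" "T \<subseteq> I"
  shows "w I = 0"
proof -
  have "w (T \<union> A) = 0" for A
    using finite[of A] by induction (simp_all add: assms weight_insert_eq_0)
  then show ?thesis
    using \<open>T \<subseteq> I\<close> by (metis sup.absorb_iff2)
qed

lemma layer_sum_eq_0: "w T = 0 \<Longrightarrow> layer_sum T m h = 0"
  by (auto simp: layer_sum_def layer_def weight_superset_eq_0 intro: sum.neutral)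

lemma scaled_ent_eq_0: "w T = 0 \<Longrightarrow> scaled_ent T m h = 0"
  by (simp add: scaled_ent_def layer_sum_eq_0)

lemma weight_mult_up: "w J * up h J = (\<Sum>x\<in>-J. w (insert x J) * h (insert x J))"
proof (cases "w J = 0")
  case True
  then show ?thesis
    by (simp add: weight_insert_eq_0)
next
  case False
  then show ?thesis
    by (simp add: up_def sum_distrib_left)
qed

lemma layer_sum_up: "layer_sum T m (up h) = real (Suc m) * layer_sum T (Suc m) h"
  using sum_layer_lower[where \<phi>="\<lambda>I. w I * h I"] by (simp add: layer_sum_def weight_mult_up)

lemma layer_sum_funpow_up: "layer_sum T m h = w T * (up ^^ m) h T / fact m"
proof (induction m arbitrary: h)
  case (Suc m)
  have "layer_sum T (Suc m) h = layer_sum T m (up h) / real (Suc m)"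
    by (simp add: layer_sum_up del: of_nat_Suc)
  also have "\<dots> = w T * (up ^^ Suc m) h T / fact (Suc m)"
    by (simp add: Suc.IH funpow_Suc_right del: funpow.simps of_nat_Suc)
  finally show ?case .
qed (simp add: layer_sum_def)

lemma layer_sum_const:
  assumes "card T + m \<le> r"
  shows "layer_sum T m (\<lambda>_. 1) = w T / fact m"
  using assms
proof (induction m)
  case (Suc m)
  have "layer_sum T m (up (\<lambda>_. 1)) = layer_sum T m (\<lambda>_. 1)"
    unfolding layer_sum_def
  proof (rule sum.cong[OF refl])
    fix J assume "J \<in> layer T m"
    then have "card J < r"
      using Suc.prems by (simp add: layer_def)
    then show "w J * up (\<lambda>_. 1) J = w J * 1"
      by (simp add: weight_mult_up weight_sum_insert)
  qed
  then have "layer_sum T (Suc m) (\<lambda>_. 1) = layer_sum T m (\<lambda>_. 1) / real (Suc m)"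
    by (simp add: layer_sum_up field_simps del: of_nat_Suc)
  then show ?case
    using Suc by (simp del: of_nat_Suc)
qed (simp add: layer_sum_def)

lemma up_nonneg:
  assumes "nonneg_on_layer T (Suc m) h" "J \<in> layer T m"
  shows "0 \<le> up h J"
  unfolding up_def
proof (rule sum_nonneg)
  fix x assume "x \<in> -J"
  then have "insert x J \<in> layer T (Suc m)"
    using assms(2) by (auto simp: layer_def)
  then have "0 < w (insert x J) \<Longrightarrow> 0 \<le> h (insert x J)"
    using assms(1) by (simp add: nonneg_on_layer_def)
  then show "0 \<le> w (insert x J) / w J * h (insert x J)"
    using weight_nonneg[of "insert x J"] weight_nonneg[of J] by (cases "w (insert x J) = 0") auto
qed

lemma nonneg_on_layer_up: "nonneg_on_layer T (Suc m) h \<Longrightarrow> nonneg_on_layer T m (up h)"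
  by (simp add: nonneg_on_layer_def up_nonneg)

lemma nonneg_on_layer_insert:
  assumes "x \<notin> T" "nonneg_on_layer T (Suc m) h"
  shows "nonneg_on_layer (insert x T) m h"
  using assms by (auto simp: nonneg_on_layer_def layer_def)

lemma scaled_ent_eq:
  assumes "card T + m \<le> r"
  shows "scaled_ent T m h = fact m * layer_sum T m (\<lambda>I. h I * ln (h I))
    - w T * ((up ^^ m) h T * ln ((up ^^ m) h T))"
proof (cases "w T = 0")
  case False
  have "layer_sum T m h / layer_sum T m (\<lambda>_. 1) = (w T * (up ^^ m) h T / fact m) / (w T / fact m)"
    by (simp only: layer_sum_const[OF assms] layer_sum_funpow_up[of T m h])
  also have "\<dots> = (up ^^ m) h T"
    using False by simp
  finally have "layer_sum T m h / layer_sum T m (\<lambda>_. 1) = (up ^^ m) h T" .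
  then show ?thesis
    by (simp add: scaled_ent_def layer_sum_funpow_up right_diff_distrib)
qed (simp add: scaled_ent_eq_0 layer_sum_eq_0)

lemma scaled_ent_decompose:
  assumes "card T + Suc m \<le> r"
  shows "scaled_ent T (Suc m) h = (\<Sum>x\<in>-T. scaled_ent (insert x T) m h) + scaled_ent T 1 ((up ^^ m) h)"
proof -
  define G where "G = (up ^^ m) h"
  have link: "fact m * layer_sum (insert x T) m (\<lambda>I. h I * ln (h I))
      = scaled_ent (insert x T) m h + w (insert x T) * (G (insert x T) * ln (G (insert x T)))"
    if "x \<in> -T" for x
    using that assms by (simp add: scaled_ent_eq G_def)
  have "real (Suc m) * layer_sum T (Suc m) (\<lambda>I. h I * ln (h I))
      = (\<Sum>x\<in>-T. layer_sum (insert x T) m (\<lambda>I. h I * ln (h I)))"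
    unfolding layer_sum_def by (rule sum_layer_extend[symmetric])
  then have "fact (Suc m) * layer_sum T (Suc m) (\<lambda>I. h I * ln (h I))
      = (\<Sum>x\<in>-T. fact m * layer_sum (insert x T) m (\<lambda>I. h I * ln (h I)))"
    by (simp add: sum_distrib_left[symmetric] del: of_nat_Suc)
  also have "\<dots> = (\<Sum>x\<in>-T. scaled_ent (insert x T) m h
      + w (insert x T) * (G (insert x T) * ln (G (insert x T))))"
    by (rule sum.cong) (simp_all add: link)
  also have "\<dots> = (\<Sum>x\<in>-T. scaled_ent (insert x T) m h) + layer_sum T 1 (\<lambda>I. G I * ln (G I))"
    by (simp add: sum.distrib layer_sum_def sum_layer_one)
  finally show ?thesis
    using assms by (simp add: scaled_ent_eq[of T] G_def)
qed

lemma layer_sum_one: "layer_sum T 1 h = (\<Sum>x\<in>-T. w (insert x T) * h (insert x T))"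
  by (simp add: layer_sum_def sum_layer_one)

lemma layer_sum_two:
  "2 * layer_sum T 2 h = (\<Sum>x\<in>-T. \<Sum>y\<in>-insert x T. w (insert y (insert x T)) * h (insert y (insert x T)))"
  using sum_layer_extend[where T=T and m=1 and \<phi>="\<lambda>I. w I * h I"]
  by (simp add: layer_sum_def numeral_2_eq_2 sum_layer_one)

text \<open>Apply \<open>link_form_nonpos\<close> to \<open>z\<close> minus its weighted mean; the cross terms vanish by
  \<open>weight_sum_insert\<close>.\<close>
lemma link_form_le:
  assumes "card T + 2 \<le> r" "0 < w T"
  shows "link_form w T z \<le> (\<Sum>x\<in>-T. w (insert x T) * z x)^2 / w T"
proof -
  define a where "a x = w (insert x T)" for x
  define b where "b x y = w (insert y (insert x T))" for x y
  define s where "s = (\<Sum>x\<in>-T. a x * z x) / w T"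
  define v where "v x = z x - s" for x
  have sum_a: "(\<Sum>x\<in>-T. a x) = w T"
    using assms weight_sum_insert by (simp add: a_def)
  have sum_b: "(\<Sum>y\<in>-insert x T. b x y) = a x" if "x \<in> -T" for x
    using that assms weight_sum_insert[of "insert x T"] by (simp add: a_def b_def)
  have "(\<Sum>x\<in>-T. a x * v x) = (\<Sum>x\<in>-T. a x * z x) - (\<Sum>x\<in>-T. a x) * s"
    by (simp add: v_def right_diff_distrib sum_subtractf sum_distrib_right)
  then have "(\<Sum>x\<in>-T. a x * v x) = 0"
    using assms sum_a by (simp add: s_def)
  then have v_form: "(\<Sum>x\<in>-T. \<Sum>y\<in>-insert x T. b x y * v x * v y) \<le> 0"
    using link_form_nonpos[OF assms(2)] by (simp add: link_form_def a_def b_def)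
  have cross: "(\<Sum>x\<in>-T. \<Sum>y\<in>-insert x T. b x y * v x) = 0"
    using \<open>(\<Sum>x\<in>-T. a x * v x) = 0\<close> sum_b by (simp add: sum_distrib_right[symmetric])
  have "b y x = b x y" for x y
    by (simp add: b_def insert_commute)
  then have cross': "(\<Sum>x\<in>-T. \<Sum>y\<in>-insert x T. b x y * v y) = 0"
    using cross sum_distinct_pairs_swap[where \<phi>="\<lambda>x y. b x y * v y"] by simp
  have "(\<Sum>x\<in>-T. \<Sum>y\<in>-insert x T. b x y * z x * z y)
     = (\<Sum>x\<in>-T. \<Sum>y\<in>-insert x T. b x y * v x * v y + s * (b x y * v x) + s * (b x y * v y) + s^2 * b x y)"
    by (simp add: v_def algebra_simps power2_eq_square)
  also have "\<dots> = (\<Sum>x\<in>-T. \<Sum>y\<in>-insert x T. b x y * v x * v y) + s^2 * w T"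
    using cross cross' sum_a sum_b by (simp add: sum.distrib sum_distrib_left[symmetric])
  also have "\<dots> \<le> (\<Sum>x\<in>-T. a x * z x)^2 / w T"
    using v_form assms by (simp add: s_def power2_eq_square)
  finally show ?thesis
    by (simp add: link_form_def a_def b_def)
qed

lemma layer_sum_xlnx_up_eq:
  "2 * layer_sum T 1 (\<lambda>I. up f I * ln (up f I))
    = (\<Sum>x\<in>-T. \<Sum>y\<in>-insert x T. w (insert y (insert x T)) * f (insert y (insert x T))
        * (ln (up f (insert x T)) + ln (up f (insert y T))))"
proof -
  define b where "b x y = w (insert y (insert x T)) * f (insert y (insert x T))" for x y
  define g where "g x = up f (insert x T)" for x
  have "layer_sum T 1 (\<lambda>I. up f I * ln (up f I)) = (\<Sum>x\<in>-T. w (insert x T) * g x * ln (g x))"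
    unfolding layer_sum_one g_def by (simp add: mult.assoc)
  also have "\<dots> = (\<Sum>x\<in>-T. \<Sum>y\<in>-insert x T. b x y * ln (g x))"
    by (simp add: g_def b_def weight_mult_up sum_distrib_right)
  finally have lhs_x: "layer_sum T 1 (\<lambda>I. up f I * ln (up f I))
      = (\<Sum>x\<in>-T. \<Sum>y\<in>-insert x T. b x y * ln (g x))" .
  also have "\<dots> = (\<Sum>x\<in>-T. \<Sum>y\<in>-insert x T. b y x * ln (g y))"
    by (rule sum_distinct_pairs_swap)
  also have "\<dots> = (\<Sum>x\<in>-T. \<Sum>y\<in>-insert x T. b x y * ln (g y))"
    by (intro sum.cong refl) (simp add: b_def insert_commute)
  finally have lhs_y: "layer_sum T 1 (\<lambda>I. up f I * ln (up f I))
      = (\<Sum>x\<in>-T. \<Sum>y\<in>-insert x T. b x y * ln (g y))" .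
  show ?thesis
    using lhs_x lhs_y by (simp add: b_def g_def distrib_left sum.distrib)
qed

lemma layer_sum_xlnx_up_le_param:
  assumes nonneg: "nonneg_on_layer T 2 f" and "0 < c"
  shows "2 * layer_sum T 1 (\<lambda>I. up f I * ln (up f I))
    \<le> 2 * layer_sum T 2 (\<lambda>I. f I * ln (f I)) + layer_sum T 1 (up f) * ln c
      + link_form w T (\<lambda>x. up f (insert x T)) / c - layer_sum T 1 (up f)"
proof -
  define b where "b x y = w (insert y (insert x T))" for x y
  define F where "F x y = f (insert y (insert x T))" for x y
  define g where "g x = up f (insert x T)" for x
  have sym: "b y x = b x y" "F y x = F x y" for x y
    by (simp_all add: b_def F_def insert_commute)
  have wg: "w (insert x T) * g x = (\<Sum>y\<in>-insert x T. b x y * F x y)" for x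
    by (simp add: g_def b_def F_def weight_mult_up)
  have bF_nonneg: "0 \<le> b x y * F x y" if "x \<in> -T" "y \<in> -insert x T" for x y
  proof -
    have "insert y (insert x T) \<in> layer T 2"
      using that by (auto simp: layer_def)
    then show ?thesis
      using nonneg weight_nonneg[of "insert y (insert x T)"]
      by (cases "b x y = 0") (auto simp: nonneg_on_layer_def b_def F_def)
  qed
  have g_nonneg: "0 \<le> g x" if "x \<in> -T" for x
    using that nonneg up_nonneg[of T 1 f "insert x T"] by (auto simp: g_def layer_def numeral_2_eq_2)
  have g_pos: "0 < g x" if "x \<in> -T" "y \<in> -insert x T" "0 < b x y * F x y" for x y
  proof -
    have "b x y * F x y \<le> w (insert x T) * g x"
      unfolding wg using that bF_nonneg by (intro member_le_sum) auto
    then have "0 < w (insert x T) * g x"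
      using that(3) by linarith
    then show ?thesis
      using g_nonneg[OF that(1)] by (auto simp: zero_less_mult_iff)
  qed
  have pointwise: "b x y * F x y * (ln (g x) + ln (g y))
      \<le> b x y * F x y * (ln (F x y) + ln c) + b x y * g x * g y / c - b x y * F x y"
    if xy: "x \<in> -T" "y \<in> -insert x T" for x y
  proof (rule mult_ln_add_le)
    assume "0 < b x y * F x y"
    then show "0 < g x \<and> 0 < g y"
      using g_pos[OF xy] g_pos[of y x] xy sym(1)[of x y] sym(2)[of x y] by auto
  qed (use \<open>0 < c\<close> xy bF_nonneg g_nonneg in \<open>auto simp: b_def weight_nonneg\<close>)
  have "layer_sum T 1 (up f) = (\<Sum>x\<in>-T. \<Sum>y\<in>-insert x T. b x y * F x y)"
    unfolding layer_sum_one by (simp add: wg flip: g_def)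
  moreover have "2 * layer_sum T 1 (\<lambda>I. up f I * ln (up f I)) \<le> (\<Sum>x\<in>-T. \<Sum>y\<in>-insert x T.
      b x y * F x y * (ln (F x y) + ln c) + b x y * g x * g y / c - b x y * F x y)"
    unfolding layer_sum_xlnx_up_eq using pointwise by (intro sum_mono) (auto simp: b_def F_def g_def)
  ultimately show ?thesis
    by (simp add: layer_sum_two link_form_def b_def F_def g_def algebra_simps sum.distrib
        sum_subtractf sum_distrib_left sum_distrib_right sum_divide_distrib)
qed

lemma layer_sum_xlnx_up_le:
  assumes T: "card T + 2 \<le> r" "0 < w T" and nonneg: "nonneg_on_layer T 2 f"
  shows "2 * layer_sum T 1 (\<lambda>I. up f I * ln (up f I))
    \<le> 2 * layer_sum T 2 (\<lambda>I. f I * ln (f I)) + layer_sum T 1 (up f) * ln (layer_sum T 1 (up f) / w T)"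
proof -
  define M where "M = layer_sum T 1 (up f)"
  define Q where "Q = link_form w T (\<lambda>x. up f (insert x T))"
  have "Q \<le> M^2 / w T"
    unfolding Q_def M_def layer_sum_one by (rule link_form_le[OF T])
  moreover have "0 \<le> M"
    using nonneg up_nonneg[of T 1 f] weight_nonneg
    by (auto simp: M_def layer_sum_def numeral_2_eq_2 intro: sum_nonneg)
  ultimately obtain c where "0 < c" "M * ln c + Q / c - M \<le> M * ln (M / w T)"
  proof (cases "M = 0")
    case True
    then show ?thesis
      using \<open>Q \<le> M^2 / w T\<close> that[of 1] by simp
  next
    case False
    then have "Q / (M / w T) \<le> M"
      using \<open>Q \<le> M^2 / w T\<close> \<open>0 \<le> M\<close> T by (simp add: field_simps power2_eq_square)
    then show ?thesis
      using False \<open>0 \<le> M\<close> T that[of "M / w T"] by simp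
  qed
  then show ?thesis
    using layer_sum_xlnx_up_le_param[OF nonneg \<open>0 < c\<close>] by (simp add: M_def Q_def)
qed

lemma two_scaled_ent_up_le:
  assumes T: "card T + 2 \<le> r" and nonneg: "nonneg_on_layer T 2 f"
  shows "2 * scaled_ent T 1 (up f) \<le> scaled_ent T 2 f"
proof (cases "w T = 0")
  case False
  then have "0 < w T"
    using weight_nonneg[of T] by linarith
  define M where "M = layer_sum T 1 (up f)"
  have up_up: "up (up f) T = M / w T"
    using layer_sum_funpow_up[of T 1 "up f"] False by (simp add: M_def)
  have "scaled_ent T 1 (up f) = layer_sum T 1 (\<lambda>I. up f I * ln (up f I)) - M * ln (M / w T)"
    using scaled_ent_eq[of T 1 "up f"] T False by (simp add: up_up)
  moreover have "scaled_ent T 2 f = 2 * layer_sum T 2 (\<lambda>I. f I * ln (f I)) - M * ln (M / w T)"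
    using scaled_ent_eq[of T 2 f] T False by (simp add: up_up numeral_2_eq_2)
  ultimately show ?thesis
    using layer_sum_xlnx_up_le[OF T \<open>0 < w T\<close> nonneg] by (simp add: M_def)
qed (simp add: scaled_ent_eq_0)

definition up_contracts_ent :: "nat \<Rightarrow> bool" where
  "up_contracts_ent k \<longleftrightarrow> (\<forall>T h. card T + Suc k \<le> r \<longrightarrow> nonneg_on_layer T (Suc k) h \<longrightarrow>
     real (Suc k) * scaled_ent T k (up h) \<le> real k * scaled_ent T (Suc k) h)"

lemma up_contracts_entD:
  "up_contracts_ent k \<Longrightarrow> card T + Suc k \<le> r \<Longrightarrow> nonneg_on_layer T (Suc k) h \<Longrightarrow>
    real (Suc k) * scaled_ent T k (up h) \<le> real k * scaled_ent T (Suc k) h"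
  by (simp add: up_contracts_ent_def)

lemma scaled_ent_funpow_up_le:
  assumes "\<And>j. 1 \<le> j \<Longrightarrow> j \<le> n \<Longrightarrow> up_contracts_ent j"
    and "card T + Suc n \<le> r" "nonneg_on_layer T (Suc n) h"
  shows "real (Suc n) * scaled_ent T 1 ((up ^^ n) h) \<le> scaled_ent T (Suc n) h"
  using assms
proof (induction n arbitrary: h)
  case (Suc n)
  define X where "X = scaled_ent T 1 ((up ^^ Suc n) h)"
  have "real (Suc n) * X \<le> scaled_ent T (Suc n) (up h)"
    using Suc.IH[of "up h"] Suc.prems nonneg_on_layer_up by (simp add: X_def funpow_Suc_right del: funpow.simps)
  then have "real (Suc (Suc n)) * (real (Suc n) * X) \<le> real (Suc (Suc n)) * scaled_ent T (Suc n) (up h)"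
    by (rule mult_left_mono) simp
  also have "\<dots> \<le> real (Suc n) * scaled_ent T (Suc (Suc n)) h"
    using Suc.prems by (intro up_contracts_entD) auto
  finally have "real (Suc n) * (real (Suc (Suc n)) * X) \<le> real (Suc n) * scaled_ent T (Suc (Suc n)) h"
    by (simp only: mult.left_commute[of "real (Suc (Suc n))"])
  then show ?case
    unfolding X_def by (simp only: mult_le_cancel_left_pos of_nat_0_less_iff zero_less_Suc)
qed simp

text \<open>Both entropies decompose over the links with the same level-1 term \<open>E\<close>
  (\<open>scaled_ent_decompose\<close>): the link parts contract by induction, and \<open>E\<close> is bounded by
  telescoping the contractions of the lower levels (\<open>scaled_ent_funpow_up_le\<close>).\<close>
lemma up_contracts_ent: "1 \<le> k \<Longrightarrow> up_contracts_ent k"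
proof (induction k rule: less_induct)
  case (less k)
  show ?case
  proof (cases "k = 1")
    case True
    show ?thesis
      unfolding up_contracts_ent_def True
      using two_scaled_ent_up_le by (simp add: numeral_2_eq_2)
  next
    case False
    then obtain m where k: "k = Suc m" "1 \<le> m"
      using less.prems by (cases k) auto
    show ?thesis
      unfolding up_contracts_ent_def
    proof (intro allI impI)
      fix T h
      assume T: "card T + Suc k \<le> r" and nonneg: "nonneg_on_layer T (Suc k) h"
      define A where "A = (\<Sum>x\<in>-T. scaled_ent (insert x T) k h)"
      define B where "B = (\<Sum>x\<in>-T. scaled_ent (insert x T) m (up h))"
      define E where "E = scaled_ent T 1 ((up ^^ k) h)"
      have split_up: "scaled_ent T k (up h) = B + E"
        using scaled_ent_decompose[of T m "up h"] T
        by (simp add: k B_def E_def funpow_Suc_right del: funpow.simps)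
      have split: "scaled_ent T (Suc k) h = A + E"
        using scaled_ent_decompose[of T k h] T by (simp add: A_def E_def)
      have "real k * scaled_ent (insert x T) m (up h) \<le> real m * scaled_ent (insert x T) k h"
        if "x \<in> -T" for x
        using up_contracts_entD[OF less.IH[of m] _ nonneg_on_layer_insert[OF _ nonneg[unfolded k]]] k that T
        by simp
      then have "real k * B \<le> (real k - 1) * A"
        unfolding A_def B_def sum_distrib_left using k by (intro sum_mono) auto
      moreover have "real k * E \<le> scaled_ent T k (up h)"
        using scaled_ent_funpow_up_le[of m T "up h"] less.IH k T nonneg_on_layer_up[OF nonneg]
        by (simp add: E_def funpow_Suc_right del: funpow.simps)
      then have "(real k - 1) * E \<le> B"
        unfolding split_up by (simp add: algebra_simps)
      ultimately have "(1 + real k) * (B + E) \<le> real k * (A + E)"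
        by (rule contraction_step[rotated]) (use k in simp)
      then show "real (Suc k) * scaled_ent T k (up h) \<le> real k * scaled_ent T (Suc k) h"
        by (simp add: split_up split)
    qed
  qed
qed

end

lemma wt_eq_fact_dval: "wt \<pi> r I = fact (r - card I) * dval \<pi> I"
proof -
  have "(\<Sum>B | B \<in> support \<pi> \<and> I \<subseteq> B. \<pi> B) = (\<Sum>S | I \<subseteq> S. \<pi> S)"
    by (rule sum.mono_neutral_left) (auto simp: support_def)
  then show ?thesis
    by (simp add: wt_def dval_def)
qed

lemma dval_nonneg: "is_distribution \<pi> \<Longrightarrow> 0 \<le> dval \<pi> I"
  unfolding dval_def by (intro sum_nonneg) (simp add: is_distribution_def)

lemma dval_eq_0_above:
  assumes "homogeneous r \<pi>" "r < card I"
  shows "dval \<pi> I = 0"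
  unfolding dval_def
proof (intro sum.neutral ballI)
  fix S assume "S \<in> {S. I \<subseteq> S}"
  then have "r < card S"
    using assms(2) card_mono[of S I] by simp
  then show "\<pi> S = 0"
    using assms(1) by (auto simp: homogeneous_def)
qed

lemma dval_sum_insert:
  assumes "homogeneous r \<pi>"
  shows "(\<Sum>x\<in>-J. dval \<pi> (insert x J)) = real (r - card J) * dval \<pi> J"
proof -
  have "(\<Sum>x\<in>-J. dval \<pi> (insert x J)) = (\<Sum>x\<in>-J. \<Sum>S | S \<in> {S. J \<subseteq> S} \<and> x \<in> S. \<pi> S)"
    unfolding dval_def by (intro sum.cong) auto
  also have "\<dots> = (\<Sum>S | J \<subseteq> S. \<Sum>x | x \<in> -J \<and> x \<in> S. \<pi> S)"
    by (rule sum.swap_restrict) auto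
  also have "\<dots> = (\<Sum>S | J \<subseteq> S. real (r - card J) * \<pi> S)"
  proof (rule sum.cong[OF refl])
    fix S assume "S \<in> {S. J \<subseteq> S}"
    moreover have "{x. x \<in> -J \<and> x \<in> S} = S - J"
      by auto
    ultimately have "(\<Sum>x | x \<in> -J \<and> x \<in> S. \<pi> S) = real (card S - card J) * \<pi> S"
      by (simp add: card_Diff_subset card_mono)
    then show "(\<Sum>x | x \<in> -J \<and> x \<in> S. \<pi> S) = real (r - card J) * \<pi> S"
      using assms by (cases "\<pi> S = 0") (auto simp: homogeneous_def)
  qed
  finally show ?thesis
    by (simp add: dval_def sum_distrib_left)
qed

lemma wt_sum_insert:
  assumes "homogeneous r \<pi>" "card J < r"
  shows "(\<Sum>x\<in>-J. wt \<pi> r (insert x J)) = wt \<pi> r J"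
proof -
  have "fact (r - card J) = real (r - card J) * fact (r - card J - 1)"
    using assms(2) by (metis fact_reduce zero_less_diff)
  moreover have "card (insert x J) = Suc (card J)" if "x \<in> -J" for x
    using that by simp
  ultimately show ?thesis
    by (simp add: wt_eq_fact_dval sum_distrib_left[symmetric] dval_sum_insert[OF assms(1)])
qed

lemma sum_dgrad: "(\<Sum>i\<in>UNIV. y i * dgrad \<pi> T i) = (\<Sum>x\<in>-T. y x * dval \<pi> (insert x T))"
  by (rule sum.mono_neutral_cong_right) (auto simp: dgrad_def)

lemma sum_dhess:
  "(\<Sum>i\<in>UNIV. \<Sum>j\<in>UNIV. y i * y j * dhess \<pi> T i j)
    = (\<Sum>x\<in>-T. \<Sum>z\<in>-insert x T. y x * y z * dval \<pi> (insert z (insert x T)))"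
proof (rule sum.mono_neutral_cong_right)
  fix x assume "x \<in> -T"
  then show "(\<Sum>j\<in>UNIV. y x * y j * dhess \<pi> T x j)
      = (\<Sum>z\<in>-insert x T. y x * y z * dval \<pi> (insert z (insert x T)))"
    by (intro sum.mono_neutral_cong_right) (auto simp: dhess_def insert_commute)
qed (auto simp: dhess_def)

lemma wt_link_form_nonpos:
  assumes slc: "strongly_log_concave \<pi>" and pos: "0 < wt \<pi> r T"
    and orth: "(\<Sum>x\<in>-T. wt \<pi> r (insert x T) * y x) = 0"
  shows "link_form (wt \<pi> r) T y \<le> 0"
proof -
  define D where "D = dval \<pi> T"
  define H where "H = (\<Sum>i\<in>UNIV. \<Sum>j\<in>UNIV. y i * y j * dhess \<pi> T i j)"
  define G where "G = (\<Sum>i\<in>UNIV. y i * dgrad \<pi> T i)"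
  have "0 < D"
    using pos by (simp add: D_def wt_eq_fact_dval zero_less_mult_iff)
  have "fact (r - card T - 1) * G = (\<Sum>x\<in>-T. wt \<pi> r (insert x T) * y x)"
    by (simp add: G_def sum_dgrad sum_distrib_left wt_eq_fact_dval ac_simps)
  then have "G = 0"
    using orth by simp
  have "(\<Sum>i\<in>UNIV. \<Sum>j\<in>UNIV. y i * y j * (dhess \<pi> T i j / D - dgrad \<pi> T i * dgrad \<pi> T j / D^2))
      = H / D - G^2 / D^2"
    by (simp add: H_def G_def algebra_simps power2_eq_square sum_subtractf sum_divide_distrib
        sum_product sum_distrib_left)
  moreover have "(\<Sum>i\<in>UNIV. \<Sum>j\<in>UNIV. y i * y j * (dhess \<pi> T i j / D - dgrad \<pi> T i * dgrad \<pi> T j / D^2)) \<le> 0"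
    using slc by (simp add: strongly_log_concave_def D_def)
  ultimately have "H \<le> 0"
    using \<open>G = 0\<close> \<open>0 < D\<close> by (simp add: divide_le_0_iff)
  moreover have "link_form (wt \<pi> r) T y = fact (r - card T - 2) * H"
    unfolding H_def sum_dhess link_form_def by (simp add: sum_distrib_left wt_eq_fact_dval ac_simps)
  ultimately show ?thesis
    by (simp add: mult_nonneg_nonpos)
qed

lemma weighted_lc_complex_wt:
  assumes "is_distribution \<pi>" "homogeneous r \<pi>" "strongly_log_concave \<pi>"
  shows "weighted_lc_complex (wt \<pi> r) r"
proof
  show "0 \<le> wt \<pi> r I" for I
    by (simp add: wt_eq_fact_dval dval_nonneg[OF assms(1)])
  show "r < card I \<Longrightarrow> wt \<pi> r I = 0" for I
    by (simp add: wt_eq_fact_dval dval_eq_0_above[OF assms(2)])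
  show "card J < r \<Longrightarrow> (\<Sum>x\<in>-J. wt \<pi> r (insert x J)) = wt \<pi> r J" for J
    by (rule wt_sum_insert[OF assms(2)])
  show "0 < wt \<pi> r T \<Longrightarrow> (\<Sum>x\<in>-T. wt \<pi> r (insert x T) * y x) = 0 \<Longrightarrow>
      link_form (wt \<pi> r) T y \<le> 0" for T y
    by (rule wt_link_form_nonpos[OF assms(3)])
qed

lemma indep_if_wt_neq_0: "wt \<pi> r I \<noteq> 0 \<Longrightarrow> indep \<pi> I"
  by (auto simp: wt_def indep_def intro: sum.neutral)

lemma Ent_cong: "(\<And>x. x \<in> A \<Longrightarrow> f x = g x) \<Longrightarrow> Ent \<mu> A f = Ent \<mu> A g"
  by (simp add: Ent_def cong: sum.cong)

context
  fixes \<pi> :: "'a::finite set \<Rightarrow> real" and r :: nat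
  assumes dist: "is_distribution \<pi>" and hom: "homogeneous r \<pi>" and slc: "strongly_log_concave \<pi>"
begin

interpretation weighted_lc_complex "wt \<pi> r" r
  using dist hom slc by (rule weighted_lc_complex_wt)

lemma sum_Mk_wt: "(\<Sum>I\<in>Mk \<pi> m. wt \<pi> r I * h I) = layer_sum {} m h"
  unfolding layer_sum_def
  by (rule sum.mono_neutral_left) (auto simp: Mk_def layer_def intro: indep_if_wt_neq_0)

lemma Ent_pik_eq:
  assumes "m \<le> r"
  shows "Ent (pik \<pi> r m) (Mk \<pi> m) h = scaled_ent {} m h / wt \<pi> r {}"
proof -
  have Z: "(\<Sum>I\<in>Mk \<pi> m. wt \<pi> r I) = wt \<pi> r {} / fact m"
    using sum_Mk_wt[where m=m and h="\<lambda>_. 1"] layer_sum_const[of "{}" m] assms by simp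
  have "(\<Sum>I\<in>Mk \<pi> m. pik \<pi> r m I * \<phi> I) = (\<Sum>I\<in>Mk \<pi> m. wt \<pi> r I * \<phi> I) / (wt \<pi> r {} / fact m)"
    for \<phi>
    unfolding pik_def Z sum_divide_distrib by (intro sum.cong) auto
  then have pik_sum: "(\<Sum>I\<in>Mk \<pi> m. pik \<pi> r m I * \<phi> I) = fact m * layer_sum {} m \<phi> / wt \<pi> r {}"
    for \<phi>
    by (simp add: sum_Mk_wt)
  show ?thesis
    unfolding Ent_def pik_sum using layer_sum_const[of "{}" m] assms
    by (simp add: scaled_ent_def right_diff_distrib diff_divide_distrib ac_simps)
qed

lemma up_op_eq_up:
  assumes "1 \<le> k" "J \<in> Mk \<pi> (k - 1)"
  shows "up_op \<pi> r k f J = up f J"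
proof -
  have "up f J = (\<Sum>I\<in>layer J 1. wt \<pi> r I / wt \<pi> r J * f I)"
    by (simp add: up_def sum_layer_one)
  also have "\<dots> = up_op \<pi> r k f J"
    unfolding up_op_def using assms
    by (intro sum.mono_neutral_right) (auto simp: Mk_def layer_def intro: ccontr dest: indep_if_wt_neq_0)
  finally show ?thesis ..
qed

lemma nonneg_on_layer_Mk:
  assumes "\<forall>I\<in>Mk \<pi> k. 0 \<le> f I"
  shows "nonneg_on_layer {} k f"
  unfolding nonneg_on_layer_def
proof (intro ballI impI)
  fix I assume "I \<in> layer {} k" "0 < wt \<pi> r I"
  then have "I \<in> Mk \<pi> k"
    using indep_if_wt_neq_0[of \<pi> r I] by (auto simp: layer_def Mk_def)
  with assms show "0 \<le> f I"
    by blast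
qed

end

theorem lemma4p3:
  fixes \<pi> :: "'a::finite set \<Rightarrow> real" and r k :: nat and f :: "'a set \<Rightarrow> real"
  assumes "is_distribution \<pi>"
    and "homogeneous r \<pi>"
    and "strongly_log_concave \<pi>"
    and "matroid_bases (support \<pi>)"
    and "2 \<le> k" and "k \<le> r"
    and "\<forall>I\<in>Mk \<pi> k. f I \<ge> 0"
  shows "Ent (pik \<pi> r k) (Mk \<pi> k) f
         \<ge> real k / (real k - 1) * Ent (pik \<pi> r (k - 1)) (Mk \<pi> (k - 1)) (up_op \<pi> r k f)"
proof -
  interpret weighted_lc_complex "wt \<pi> r" r
    using assms(1-3) by (rule weighted_lc_complex_wt)
  obtain m where k: "k = Suc m" "1 \<le> m"
    using assms(5) by (cases k) auto
  have "real k * scaled_ent {} m (up f) \<le> (real k - 1) * scaled_ent {} k f"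
    using up_contracts_entD[OF up_contracts_ent[OF k(2)]] nonneg_on_layer_Mk[OF assms(1-3,7)] assms(6) k
    by simp
  then have "real k / (real k - 1) * scaled_ent {} m (up f) \<le> scaled_ent {} k f"
    using k by (simp add: field_simps)
  then have "real k / (real k - 1) * (scaled_ent {} m (up f) / wt \<pi> r {}) \<le> scaled_ent {} k f / wt \<pi> r {}"
    using divide_right_mono weight_nonneg by fastforce
  moreover have "Ent (pik \<pi> r m) (Mk \<pi> m) (up_op \<pi> r k f) = scaled_ent {} m (up f) / wt \<pi> r {}"
    using Ent_cong[of "Mk \<pi> m" "up_op \<pi> r k f" "up f"] up_op_eq_up[OF assms(1-3)] Ent_pik_eq[OF assms(1-3)]
      assms(6) k by simp
  moreover have "Ent (pik \<pi> r k) (Mk \<pi> k) f = scaled_ent {} k f / wt \<pi> r {}"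
    using Ent_pik_eq[OF assms(1-3) assms(6)] .
  ultimately show ?thesis
    using k by simp
qed

end
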